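(* Let $B\in\Gamma^q_u$ be an affine binarization polytope. Then there exists a linear binarization polytope $B'\in\Gamma^q_u$ such that $B'=h(B)$ for some unimodular transformation $h:\mathbb{R}^{1+q}\to\mathbb{R}^{1+q}$.
   Context: For positive integers $q,u$, $\Gamma^q_u$ is the set of rational polytopes $B\subseteq\{(x,z)\in\mathbb{R}\times[0,1]^q:0\le x\le u\}$ with $\operatorname{proj}_x(B\cap(\mathbb{R}\times\{0,1\}^q))=\{0,1,\dots,u\}$ (binarization polytopes). $B$ is affine if there are $\alpha\in\mathbb{R}^q$ and $\alpha_0\in\mathbb{R}$ with $x=\alpha^Tz+\alpha_0$ for all $(x,z)\in B$; it is linear if this holds with $\alpha_0=0$. A unimodular transformation of $\mathbb{R}^N$ is a map $y\mapsto Uy+v$ with $U$ an integral $N\times N$ matrix of determinant $\pm1$ and $v\in\mathbb{Z}^N$. *)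

theory Defs
  imports "HOL-Analysis.Analysis"
begin

text \<open>Points of R^(1+q) are vectors indexed by unit + 'q, where CARD('q) = q.
  The coordinate Inl () is x, the coordinates Inr i are z.\<close>

definition xc :: "real^(unit + 'q::finite) \<Rightarrow> real" where
  "xc y = y $ Inl ()"

definition zc :: "real^(unit + 'q::finite) \<Rightarrow> real^'q" where
  "zc y = (\<chi> i. y $ Inr i)"

definition rational_polytope :: "(real^'n::finite) set \<Rightarrow> bool" where
  "rational_polytope B \<longleftrightarrow>
     (\<exists>V. finite V \<and> (\<forall>v\<in>V. \<forall>i. v $ i \<in> \<rat>) \<and> B = convex hull V)"

definition Gamma :: "nat \<Rightarrow> (real^(unit + 'q::finite)) set set" where
  "Gamma u = {B. rational_polytope B \<and>
      (\<forall>y\<in>B. 0 \<le> xc y \<and> xc y \<le> real u \<and> (\<forall>i. 0 \<le> zc y $ i \<and> zc y $ i \<le> 1)) \<and>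
      xc ` {y\<in>B. \<forall>i. zc y $ i \<in> {0, 1}} = real ` {0..u}}"

definition affine_bp :: "(real^(unit + 'q::finite)) set \<Rightarrow> bool" where
  "affine_bp B \<longleftrightarrow> (\<exists>(\<alpha>::real^'q) (\<alpha>0::real). \<forall>y\<in>B. xc y = \<alpha> \<bullet> zc y + \<alpha>0)"

definition linear_bp :: "(real^(unit + 'q::finite)) set \<Rightarrow> bool" where
  "linear_bp B \<longleftrightarrow> (\<exists>(\<alpha>::real^'q). \<forall>y\<in>B. xc y = \<alpha> \<bullet> zc y)"

definition unimodular_transformation :: "(real^'n::finite \<Rightarrow> real^'n) \<Rightarrow> bool" where
  "unimodular_transformation h \<longleftrightarrow>
     (\<exists>(U::real^'n^'n) (v::real^'n).
        (\<forall>i j. U $ i $ j \<in> \<int>) \<and> (det U = 1 \<or> det U = -1) \<and> (\<forall>i. v $ i \<in> \<int>) \<and>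
        h = (\<lambda>y. U *v y + v))"

end

theory Submission
  imports Defs
begin

text \<open>Since 0 lies in the projection, B contains a binary point (0, s). The unimodular
  reflection of the cube [0,1]^q sending s to the origin (replace z_i by 1 - z_i exactly
  where s_i = 1) keeps x and maps B onto another binarization polytope, and the affine
  relation x = \<alpha>\<bullet>z + \<alpha>0, which vanishes at (0, s), becomes linear in the reflected
  coordinates.\<close>

definition binary_vec :: "real^'n::finite \<Rightarrow> bool" where
  "binary_vec s \<longleftrightarrow> (\<forall>i. s $ i \<in> {0, 1})"

lemma binary_vec_nth: "binary_vec s \<Longrightarrow> s $ i = 0 \<or> s $ i = 1"
  by (simp add: binary_vec_def)

lemma Gamma_iff:
  "B \<in> Gamma u \<longleftrightarrow>
     rational_polytope B \<and>
     (\<forall>y\<in>B. 0 \<le> xc y \<and> xc y \<le> real u \<and> (\<forall>i. 0 \<le> zc y $ i \<and> zc y $ i \<le> 1)) \<and>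
     xc ` {y\<in>B. binary_vec (zc y)} = real ` {0..u}"
  by (simp add: Gamma_def binary_vec_def)

lemma rational_polytope_affine_image:
  fixes U :: "real^'n::finite^'n"
  assumes "rational_polytope B" and "\<forall>i j. U $ i $ j \<in> \<rat>" and "\<forall>i. v $ i \<in> \<rat>"
  shows "rational_polytope ((\<lambda>y. U *v y + v) ` B)"
proof -
  obtain V where V: "finite V" "\<forall>w\<in>V. \<forall>i. w $ i \<in> \<rat>" "B = convex hull V"
    using assms(1) unfolding rational_polytope_def by blast
  have "(\<lambda>y. U *v y + v) ` B = (\<lambda>x. v + x) ` ((\<lambda>y. U *v y) ` (convex hull V))"
    by (simp add: V(3) image_image add.commute)
  also have "\<dots> = (\<lambda>x. v + x) ` (convex hull ((\<lambda>y. U *v y) ` V))"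
    by (simp add: convex_hull_linear_image)
  also have "\<dots> = convex hull ((\<lambda>x. v + x) ` ((\<lambda>y. U *v y) ` V))"
    by (rule convex_hull_translation[symmetric])
  also have "\<dots> = convex hull ((\<lambda>y. U *v y + v) ` V)"
    by (simp add: image_image add.commute)
  finally have hull: "(\<lambda>y. U *v y + v) ` B = convex hull ((\<lambda>y. U *v y + v) ` V)" .
  have "(U *v w + v) $ i \<in> \<rat>" if "w \<in> V" for w i
  proof -
    have "(U *v w) $ i = (\<Sum>j\<in>UNIV. U $ i $ j * w $ j)"
      by (simp add: matrix_vector_mult_def)
    also have "\<dots> \<in> \<rat>"
      using assms(2) V(2) that by (intro Rats_sum Rats_mult) auto
    finally show ?thesis
      using assms(3) by (simp add: Rats_add)
  qed
  then show ?thesis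
    unfolding rational_polytope_def
    by (intro exI[of _ "(\<lambda>y. U *v y + v) ` V"] conjI) (auto simp: V(1) hull)
qed

definition reflection_matrix :: "real^'q::finite \<Rightarrow> real^(unit + 'q)^(unit + 'q)" where
  "reflection_matrix s =
     (\<chi> k l. if k = l then (case k of Inl _ \<Rightarrow> 1 | Inr i \<Rightarrow> 1 - 2 * s $ i) else 0)"

definition reflection_shift :: "real^'q::finite \<Rightarrow> real^(unit + 'q)" where
  "reflection_shift s = (\<chi> k. case k of Inl _ \<Rightarrow> 0 | Inr i \<Rightarrow> s $ i)"

definition cube_reflection :: "real^'q::finite \<Rightarrow> real^(unit + 'q) \<Rightarrow> real^(unit + 'q)" where
  "cube_reflection s y = reflection_matrix s *v y + reflection_shift s"

lemma cube_reflection_nth: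
  "cube_reflection s y $ k =
     (case k of Inl _ \<Rightarrow> y $ k | Inr i \<Rightarrow> (1 - 2 * s $ i) * y $ k + s $ i)"
proof -
  have "(reflection_matrix s *v y) $ k =
      (\<Sum>l\<in>UNIV. (if k = l then (case k of Inl _ \<Rightarrow> 1 | Inr i \<Rightarrow> 1 - 2 * s $ i) else 0) * y $ l)"
    by (simp add: reflection_matrix_def matrix_vector_mult_def)
  also have "\<dots> = (case k of Inl _ \<Rightarrow> 1 | Inr i \<Rightarrow> 1 - 2 * s $ i) * y $ k"
    by (simp add: if_distrib[of "\<lambda>c. c * y $ _"] cong: if_cong)
  finally show ?thesis
    by (simp add: cube_reflection_def reflection_shift_def split: sum.splits)
qed

lemma xc_cube_reflection [simp]: "xc (cube_reflection s y) = xc y"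
  by (simp add: xc_def cube_reflection_nth)

lemma zc_cube_reflection [simp]:
  "zc (cube_reflection s y) $ i = (1 - 2 * s $ i) * zc y $ i + s $ i"
  by (simp add: zc_def cube_reflection_nth)

lemma unimodular_cube_reflection:
  assumes "binary_vec s"
  shows "unimodular_transformation (cube_reflection s)"
  unfolding unimodular_transformation_def
proof (intro exI conjI)
  note s01 = binary_vec_nth[OF assms(1)]
  have s_int: "s $ i \<in> \<int>" and two_s_int: "2 * s $ i \<in> \<int>" for i
    using s01[of i] by auto
  let ?U = "reflection_matrix s"
  show "\<forall>k l. ?U $ k $ l \<in> \<int>"
    using two_s_int by (auto simp: reflection_matrix_def split: sum.splits)
  have "\<bar>1 - 2 * s $ i\<bar> = 1" for i
    using s01[of i] by auto
  then have "\<bar>?U $ k $ k\<bar> = 1" for k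
    by (cases k) (auto simp: reflection_matrix_def)
  then have "\<bar>det ?U\<bar> = 1"
    by (simp add: det_diagonal reflection_matrix_def abs_prod)
  then show "det ?U = 1 \<or> det ?U = -1"
    by linarith
  show "\<forall>k. reflection_shift s $ k \<in> \<int>"
    using s_int by (auto simp: reflection_shift_def split: sum.splits)
qed (simp add: cube_reflection_def fun_eq_iff)

lemma binary_vec_zc_cube_reflection_iff:
  assumes "binary_vec s"
  shows "binary_vec (zc (cube_reflection s y)) \<longleftrightarrow> binary_vec (zc y)"
proof -
  note s01 = binary_vec_nth[OF assms(1)]
  have "zc (cube_reflection s y) $ i \<in> {0, 1} \<longleftrightarrow> zc y $ i \<in> {0, 1}" for i
    using s01[of i] by auto
  then show ?thesis
    by (simp add: binary_vec_def)
qed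

lemma cube_reflection_Gamma:
  assumes "binary_vec s" and "B \<in> Gamma u"
  shows "cube_reflection s ` B \<in> Gamma u"
proof -
  let ?r = "cube_reflection s"
  note s01 = binary_vec_nth[OF assms(1)]
  then have s_rat: "s $ i \<in> \<rat>" for i
    by (metis Rats_0 Rats_1)
  have rat: "rational_polytope B"
    and box: "\<And>y. y \<in> B \<Longrightarrow> 0 \<le> xc y \<and> xc y \<le> real u \<and> (\<forall>i. 0 \<le> zc y $ i \<and> zc y $ i \<le> 1)"
    and proj: "xc ` {y\<in>B. binary_vec (zc y)} = real ` {0..u}"
    using assms(2) unfolding Gamma_iff by auto
  show ?thesis
    unfolding Gamma_iff
  proof (intro conjI)
    have "\<forall>k l. reflection_matrix s $ k $ l \<in> \<rat>" "\<forall>k. reflection_shift s $ k \<in> \<rat>"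
      using s_rat by (auto simp: reflection_matrix_def reflection_shift_def split: sum.splits)
    moreover have "?r = (\<lambda>y. reflection_matrix s *v y + reflection_shift s)"
      by (simp add: fun_eq_iff cube_reflection_def)
    ultimately show "rational_polytope (?r ` B)"
      using rational_polytope_affine_image[OF rat] by simp
  next
    show "\<forall>y'\<in>?r ` B. 0 \<le> xc y' \<and> xc y' \<le> real u \<and> (\<forall>i. 0 \<le> zc y' $ i \<and> zc y' $ i \<le> 1)"
    proof
      fix y' assume "y' \<in> ?r ` B"
      then obtain y where y: "y \<in> B" "y' = ?r y"
        by blast
      have "0 \<le> zc y' $ i \<and> zc y' $ i \<le> 1" for i
        using box[OF y(1)] s01[of i] by (cases "s $ i = 0") (auto simp: y(2))
      then show "0 \<le> xc y' \<and> xc y' \<le> real u \<and> (\<forall>i. 0 \<le> zc y' $ i \<and> zc y' $ i \<le> 1)"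
        using box[OF y(1)] by (simp add: y(2))
    qed
  next
    have "{y\<in>?r ` B. binary_vec (zc y)} = ?r ` {y\<in>B. binary_vec (zc y)}"
      using binary_vec_zc_cube_reflection_iff[OF assms(1)] by auto
    then show "xc ` {y\<in>?r ` B. binary_vec (zc y)} = real ` {0..u}"
      using proj by (simp add: image_image)
  qed
qed

lemma linear_bp_cube_reflection:
  assumes "binary_vec s" and aff: "\<forall>y\<in>B. xc y = \<alpha> \<bullet> zc y - \<alpha> \<bullet> s"
  shows "linear_bp (cube_reflection s ` B)"
  unfolding linear_bp_def
proof (intro exI ballI)
  fix y' assume "y' \<in> cube_reflection s ` B"
  then obtain y where y: "y \<in> B" "y' = cube_reflection s y"
    by blast
  have "(1 - 2 * s $ i) * \<alpha> $ i * ((1 - 2 * s $ i) * zc y $ i + s $ i) =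
        \<alpha> $ i * zc y $ i - \<alpha> $ i * s $ i" for i
  proof -
    from binary_vec_nth[OF assms(1), of i] show ?thesis
      by (auto simp: algebra_simps)
  qed
  then have "(\<chi> i. (1 - 2 * s $ i) * \<alpha> $ i) \<bullet> zc y' = \<alpha> \<bullet> zc y - \<alpha> \<bullet> s"
    by (simp add: inner_vec_def y(2) sum_subtractf)
  then show "xc y' = (\<chi> i. (1 - 2 * s $ i) * \<alpha> $ i) \<bullet> zc y'"
    using aff y by simp
qed

lemma Gamma_binary_point_at_zero:
  assumes "B \<in> Gamma u"
  obtains y where "y \<in> B" "binary_vec (zc y)" "xc y = 0"
proof -
  have "0 \<in> xc ` {y\<in>B. binary_vec (zc y)}"
    using assms unfolding Gamma_iff by force
  then show ?thesis
    using that by auto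
qed

theorem proposition2:
  fixes B :: "(real^(unit + 'q::finite)) set" and u :: nat
  assumes "u > 0" and "B \<in> Gamma u" and "affine_bp B"
  shows "\<exists>B' h. B' \<in> Gamma u \<and> linear_bp B' \<and> unimodular_transformation h \<and> B' = h ` B"
proof -
  obtain \<alpha> \<alpha>0 where aff: "\<forall>y\<in>B. xc y = (\<alpha>::real^'q) \<bullet> zc y + \<alpha>0"
    using assms(3) unfolding affine_bp_def by blast
  obtain y0 where y0: "y0 \<in> B" "binary_vec (zc y0)" "xc y0 = 0"
    using Gamma_binary_point_at_zero[OF assms(2)] .
  define s where "s = zc y0"
  have "\<alpha>0 = - (\<alpha> \<bullet> s)"
    using aff y0 by (simp add: s_def)
  then have linear_in_s: "\<forall>y\<in>B. xc y = \<alpha> \<bullet> zc y - \<alpha> \<bullet> s"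
    using aff by simp
  have s: "binary_vec s"
    using y0(2) by (simp add: s_def)
  show ?thesis
  proof (intro exI conjI)
    show "cube_reflection s ` B \<in> Gamma u"
      using s assms(2) by (rule cube_reflection_Gamma)
    show "linear_bp (cube_reflection s ` B)"
      using s linear_in_s by (rule linear_bp_cube_reflection)
    show "unimodular_transformation (cube_reflection s)"
      using s by (rule unimodular_cube_reflection)
  qed (rule refl)
qed

end
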